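(* Let $\Delta$ be a simplicial complex on a finite vertex set $[m]$. If $\Delta$ is shifted (respectively, compressed), then so is $\mathrm{Inc}(\Delta)$.
   Context: $\mathbb{N}=\{1,2,3,\dots\}$, $[m]=\{1,\dots,m\}$. A simplicial complex on $[m]$ is a collection of subsets of $[m]$ closed under taking subsets. For $d\ge1$, $F_d(\Delta)$ is the set of faces of $\Delta$ with exactly $d$ elements, viewed in $\binom{\mathbb{N}}{d}$ (the $d$-subsets of $\mathbb{N}$, written $\mathbf{u}=(u_1,\dots,u_d)$ with $u_1<\cdots<u_d$). Squashed order: $\mathbf{u}<\mathbf{v}$ iff the largest element of the symmetric difference of $\mathbf u,\mathbf v$ lies in $\mathbf{v}$; a finite family in $\binom{\mathbb{N}}{d}$ is compressed if it consists of the smallest elements of $\binom{\mathbb{N}}{d}$ in this order. Borel order: $\mathbf{v}\le_B\mathbf{u}$ iff $v_i\le u_i$ for all $i$; a family is shifted if it contains every $\mathbf{v}\le_B\mathbf{u}$ for each of its members $\mathbf{u}$. $\Delta$ is shifted (resp. compressed) if $F_d(\Delta)$ is shifted (resp. compressed) for every $d\ge1$. $\mathrm{Inc}_1$ is the set of maps $\pi\colon\mathbb{N}\to\mathbb{N}$ with $\pi(j)<\pi(j+1)$ and $\pi(j)\le j+1$ for all $j$, acting by $\pi(\mathbf{u})=(\pi(u_1),\ldots,\pi(u_d))$; for $\mathcal{F}\subseteq\binom{\mathbb{N}}{d}$, $\mathrm{Inc}(\mathcal{F})=\{\pi(\mathbf{u})\mid\mathbf{u}\in\mathcal{F},\pi\in\mathrm{Inc}_1\}$,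 and $\mathrm{Inc}(\Delta)=\bigcup_{d\ge1}\mathrm{Inc}(F_d(\Delta))$ (together with the empty face), which is again a simplicial complex. *)

theory Defs
  imports Main
begin

definition Nsubsets :: "nat \<Rightarrow> nat set set" where
  "Nsubsets d = {u. finite u \<and> card u = d \<and> 0 \<notin> u}"

definition simplicial_complex :: "nat \<Rightarrow> nat set set \<Rightarrow> bool" where
  "simplicial_complex m \<Delta> \<longleftrightarrow>
     (\<forall>F\<in>\<Delta>. F \<subseteq> {1..m}) \<and> (\<forall>F\<in>\<Delta>. \<forall>G. G \<subseteq> F \<longrightarrow> G \<in> \<Delta>)"

definition faces :: "nat \<Rightarrow> nat set set \<Rightarrow> nat set set" where
  "faces d \<Delta> = {F \<in> \<Delta>. finite F \<and> card F = d}"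

definition borel_le :: "nat set \<Rightarrow> nat set \<Rightarrow> bool" where
  "borel_le v u \<longleftrightarrow> card v = card u \<and>
     (\<forall>i<card u. sorted_list_of_set v ! i \<le> sorted_list_of_set u ! i)"

definition squash_less :: "nat set \<Rightarrow> nat set \<Rightarrow> bool" where
  "squash_less u v \<longleftrightarrow> u \<noteq> v \<and> Max ((u - v) \<union> (v - u)) \<in> v"

definition shifted_family :: "nat \<Rightarrow> nat set set \<Rightarrow> bool" where
  "shifted_family d \<F> \<longleftrightarrow> (\<forall>u\<in>\<F>. \<forall>v\<in>Nsubsets d. borel_le v u \<longrightarrow> v \<in> \<F>)"

definition compressed_family :: "nat \<Rightarrow> nat set set \<Rightarrow> bool" where
  "compressed_family d \<F> \<longleftrightarrow> finite \<F> \<and>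
     (\<forall>u\<in>\<F>. \<forall>v\<in>Nsubsets d. squash_less v u \<longrightarrow> v \<in> \<F>)"

definition shifted_complex :: "nat set set \<Rightarrow> bool" where
  "shifted_complex \<Delta> \<longleftrightarrow> (\<forall>d\<ge>1. shifted_family d (faces d \<Delta>))"

definition compressed_complex :: "nat set set \<Rightarrow> bool" where
  "compressed_complex \<Delta> \<longleftrightarrow> (\<forall>d\<ge>1. compressed_family d (faces d \<Delta>))"

text \<open>Inc_1: maps pi : N \<rightarrow> N with pi(j) < pi(j+1) and pi(j) \<le> j+1 for all j \<ge> 1
  (values at 0 are irrelevant).\<close>
definition Inc1 :: "(nat \<Rightarrow> nat) set" where
  "Inc1 = {\<pi>. (\<forall>j\<ge>1. \<pi> j \<ge> 1 \<and> \<pi> j < \<pi> (Suc j) \<and> \<pi> j \<le> j + 1)}"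

definition IncFam :: "nat set set \<Rightarrow> nat set set" where
  "IncFam \<F> = {\<pi> ` u | u \<pi>. u \<in> \<F> \<and> \<pi> \<in> Inc1}"

definition IncComplex :: "nat set set \<Rightarrow> nat set set" where
  "IncComplex \<Delta> = insert {} (\<Union>d\<in>{1..}. IncFam (faces d \<Delta>))"

end

theory Submission
  imports Defs
begin

(*
  Every \<pi> \<in> Inc1 agrees on a finite set of positive integers with a gap insertion
  shift_from s, which fixes j < s and sends j \<ge> s to j + 1.  Hence the d-faces of Inc(\<Delta>)
  are exactly the sets shift_from s ` u with u a d-face of \<Delta>.  If v precedes such a set in
  the Borel or the squashed order, then v has a gap s' whose closing unshift_from s' turns v
  into a set preceding (or equal to) u; that set is a face of \<Delta> because \<Delta> is shifted resp.
  compressed, and v is recovered from it by reopening the gap s'.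
*)

definition shift_from :: "nat \<Rightarrow> nat \<Rightarrow> nat" where
  "shift_from s j = (if j < s then j else Suc j)"

definition unshift_from :: "nat \<Rightarrow> nat \<Rightarrow> nat" where
  "unshift_from s j = (if j < s then j else j - 1)"

lemma strict_mono_shift_from: "strict_mono (shift_from s)"
  unfolding strict_mono_def shift_from_def by auto

lemma inj_shift_from: "inj (shift_from s)"
  using strict_mono_shift_from strict_mono_imp_inj_on by blast

lemma card_shift_from_image: "card (shift_from s ` A) = card A"
  by (rule card_image[OF inj_on_subset[OF inj_shift_from subset_UNIV]])

lemma shift_from_image_unshift_from_image:
  assumes "s \<notin> v" shows "shift_from s ` unshift_from s ` v = v"
proof -
  have "shift_from s (unshift_from s x) = x" if "x \<in> v" for x
    using that assms unfolding shift_from_def unshift_from_def by (cases "x < s"; cases "x = s") auto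
  then show ?thesis by (simp add: image_image)
qed

lemma unshift_from_image_id:
  assumes "\<forall>x\<in>v. x < s" shows "unshift_from s ` v = v"
  using assms unfolding unshift_from_def by simp

lemma strict_mono_on_unshift_from:
  assumes "s \<notin> v" shows "strict_mono_on v (unshift_from s)"
proof (rule strict_mono_onI)
  fix x y assume "x \<in> v" "y \<in> v" "x < y"
  then have "x \<noteq> s" "y \<noteq> s" using assms by auto
  with \<open>x < y\<close> show "unshift_from s x < unshift_from s y" unfolding unshift_from_def by auto
qed

lemma shift_from_image_Nsubsets:
  "u \<in> Nsubsets d \<Longrightarrow> shift_from s ` u \<in> Nsubsets d"
  unfolding Nsubsets_def by (auto simp: card_shift_from_image) (simp add: shift_from_def split: if_splits)

lemma unshift_from_image_Nsubsets:
  assumes "v \<in> Nsubsets d" "s \<ge> 1" "s \<notin> v"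
  shows "unshift_from s ` v \<in> Nsubsets d"
proof -
  have "card (unshift_from s ` v) = card v"
    using card_shift_from_image[of s "unshift_from s ` v"] shift_from_image_unshift_from_image[OF assms(3)]
    by simp
  moreover have "0 \<notin> unshift_from s ` v"
    using assms unfolding Nsubsets_def unshift_from_def
    by (auto simp: le_Suc_eq)
  ultimately show ?thesis using assms(1) unfolding Nsubsets_def by auto
qed

lemma shift_from_in_Inc1: "s \<ge> 1 \<Longrightarrow> shift_from s \<in> Inc1"
  unfolding Inc1_def shift_from_def by auto

lemma Inc1D:
  assumes "\<pi> \<in> Inc1" "j \<ge> 1"
  shows "\<pi> j \<ge> 1" "\<pi> j < \<pi> (Suc j)" "\<pi> j \<le> Suc j"
  using assms unfolding Inc1_def by auto

lemma Inc1_ge_self: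
  assumes "\<pi> \<in> Inc1" "j \<ge> 1" shows "\<pi> j \<ge> j"
  using assms(2)
proof (induction j rule: dec_induct)
  case base
  show ?case using Inc1D(1)[OF assms(1)] by simp
next
  case (step n)
  then show ?case using Inc1D(2)[OF assms(1) step(1)] by linarith
qed

text \<open>As \<open>\<pi>\<close> is strictly increasing with \<open>j \<le> \<pi> j \<le> j + 1\<close>, once \<open>\<pi> j = j + 1\<close> this persists
  for all larger \<open>j\<close>.\<close>
lemma Inc1_agrees_with_shift_from:
  assumes "\<pi> \<in> Inc1"
  shows "\<exists>s\<ge>1. \<forall>j\<in>{1..n}. \<pi> j = shift_from s j"
proof (cases "\<forall>j\<in>{1..n}. \<pi> j = j")
  case True
  then show ?thesis unfolding shift_from_def by (intro exI[of _ "Suc n"]) auto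
next
  case False
  define s where "s = (LEAST j. j \<ge> 1 \<and> \<pi> j \<noteq> j)"
  from False obtain j0 where "j0 \<ge> 1" "\<pi> j0 \<noteq> j0" by auto
  then have s: "s \<ge> 1" "\<pi> s \<noteq> s"
    using LeastI[of "\<lambda>j. j \<ge> 1 \<and> \<pi> j \<noteq> j" j0] unfolding s_def by auto
  have below: "\<pi> j = j" if "1 \<le> j" "j < s" for j
    using that not_less_Least unfolding s_def by blast
  have above: "\<pi> j = Suc j" if "s \<le> j" for j
    using that
  proof (induction j rule: dec_induct)
    case base
    show ?case using s Inc1_ge_self[OF assms s(1)] Inc1D(3)[OF assms s(1)] by linarith
  next
    case (step n)
    have "n \<ge> 1" using step(1) s(1) by linarith
    then show ?case
      using step(3) Inc1D(2)[OF assms, of n] Inc1D(3)[OF assms, of "Suc n"] by linarith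
  qed
  have "\<pi> j = shift_from s j" if "j \<ge> 1" for j
    using below above that unfolding shift_from_def by auto
  then show ?thesis using s(1) by auto
qed

lemma Inc1_image_eq_shift_from_image:
  assumes "\<pi> \<in> Inc1" "finite u" "0 \<notin> u"
  shows "\<exists>s\<ge>1. \<pi> ` u = shift_from s ` u"
proof -
  have "u \<subseteq> {1..Max (insert 0 u)}"
  proof
    fix x assume "x \<in> u"
    then show "x \<in> {1..Max (insert 0 u)}"
      using assms(2,3) by (cases x) auto
  qed
  moreover obtain s where "s \<ge> 1" "\<forall>j\<in>{1..Max (insert 0 u)}. \<pi> j = shift_from s j"
    using Inc1_agrees_with_shift_from[OF assms(1)] by blast
  ultimately show ?thesis by (intro exI[of _ s]) (auto intro!: image_cong)
qed

definition shift_images :: "nat set set \<Rightarrow> nat set set" where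
  "shift_images \<F> = {shift_from s ` u | u s. u \<in> \<F> \<and> s \<ge> 1}"

lemma finite_shift_images:
  assumes "finite \<F>" "\<forall>u\<in>\<F>. finite u"
  shows "finite (shift_images \<F>)"
proof (rule finite_subset)
  show "shift_images \<F> \<subseteq> Pow (\<Union>\<F> \<union> Suc ` \<Union>\<F>)"
    unfolding shift_images_def shift_from_def by auto
  show "finite (Pow (\<Union>\<F> \<union> Suc ` \<Union>\<F>))"
    using assms by simp
qed

lemma shift_images_down_closed:
  assumes F: "\<F> \<subseteq> Nsubsets d"
    and closed: "\<And>u v. u \<in> \<F> \<Longrightarrow> v \<in> Nsubsets d \<Longrightarrow> R v u \<Longrightarrow> v \<in> \<F>"
    and lift: "\<And>u v s. u \<in> Nsubsets d \<Longrightarrow> v \<in> Nsubsets d \<Longrightarrow> s \<ge> 1 \<Longrightarrow>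
                 R v (shift_from s ` u) \<Longrightarrow>
                 \<exists>s'\<ge>1. s' \<notin> v \<and> (R (unshift_from s' ` v) u \<or> unshift_from s' ` v = u)"
    and w: "w \<in> shift_images \<F>" and v: "v \<in> Nsubsets d" and "R v w"
  shows "v \<in> shift_images \<F>"
proof -
  obtain u s where u: "u \<in> \<F>" "s \<ge> 1" "w = shift_from s ` u"
    using w unfolding shift_images_def by auto
  then obtain s' where s': "s' \<ge> 1" "s' \<notin> v"
      and below: "R (unshift_from s' ` v) u \<or> unshift_from s' ` v = u"
    using lift F v \<open>R v w\<close> by blast
  have "unshift_from s' ` v \<in> \<F>"
    using below closed[OF u(1) unshift_from_image_Nsubsets[OF v s']] u(1) by auto
  moreover have "v = shift_from s' ` unshift_from s' ` v"
    using shift_from_image_unshift_from_image[OF s'(2)] by simp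
  ultimately show ?thesis
    unfolding shift_images_def using s'(1) by blast
qed

lemma simplicial_complex_faces_Nsubsets:
  assumes "simplicial_complex m \<Delta>" shows "faces d \<Delta> \<subseteq> Nsubsets d"
proof
  fix F assume "F \<in> faces d \<Delta>"
  moreover then have "F \<subseteq> {1..m}" using assms unfolding simplicial_complex_def faces_def by auto
  ultimately show "F \<in> Nsubsets d" unfolding faces_def Nsubsets_def by auto
qed

lemma faces_IncComplex:
  assumes \<Delta>: "simplicial_complex m \<Delta>" and "d \<ge> 1"
  shows "faces d (IncComplex \<Delta>) = shift_images (faces d \<Delta>)"
proof
  show "faces d (IncComplex \<Delta>) \<subseteq> shift_images (faces d \<Delta>)"
  proof
    fix w assume w: "w \<in> faces d (IncComplex \<Delta>)"
    then have "w \<noteq> {}" using \<open>d \<ge> 1\<close> unfolding faces_def by auto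
    with w obtain d' u \<pi> where u: "u \<in> faces d' \<Delta>" "\<pi> \<in> Inc1" "w = \<pi> ` u"
      unfolding faces_def IncComplex_def IncFam_def by auto
    then have "u \<in> Nsubsets d'" using simplicial_complex_faces_Nsubsets[OF \<Delta>] by auto
    then obtain s where s: "s \<ge> 1" "w = shift_from s ` u"
      using Inc1_image_eq_shift_from_image[OF u(2)] u(3) unfolding Nsubsets_def by blast
    then have "card u = d"
      using w card_shift_from_image[of s u] unfolding faces_def by auto
    then have "u \<in> faces d \<Delta>" using u(1) unfolding faces_def by auto
    then show "w \<in> shift_images (faces d \<Delta>)" unfolding shift_images_def using s by auto
  qed
  show "shift_images (faces d \<Delta>) \<subseteq> faces d (IncComplex \<Delta>)"
  proof
    fix w assume "w \<in> shift_images (faces d \<Delta>)"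
    then obtain u s where u: "u \<in> faces d \<Delta>" "s \<ge> 1" "w = shift_from s ` u"
      unfolding shift_images_def by auto
    then have "w \<in> IncFam (faces d \<Delta>)"
      unfolding IncFam_def using shift_from_in_Inc1 by blast
    then have "w \<in> IncComplex \<Delta>" unfolding IncComplex_def using \<open>d \<ge> 1\<close> by auto
    moreover have "w \<in> Nsubsets d"
      using u simplicial_complex_faces_Nsubsets[OF \<Delta>] shift_from_image_Nsubsets by blast
    ultimately show "w \<in> faces d (IncComplex \<Delta>)" unfolding faces_def Nsubsets_def by auto
  qed
qed

lemma squash_less_image_strict_mono:
  fixes f :: "nat \<Rightarrow> nat"
  assumes "strict_mono f" "finite u" "finite v"
  shows "squash_less (f ` v) (f ` u) \<longleftrightarrow> squash_less v u"
proof -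
  have inj: "inj f" using assms(1) strict_mono_imp_inj_on by blast
  have sym: "(f ` v - f ` u) \<union> (f ` u - f ` v) = f ` ((v - u) \<union> (u - v))"
    using inj by (auto simp: image_set_diff image_Un)
  have "Max (f ` D) = f (Max D)" if "finite D" "D \<noteq> {}" for D
    using that assms(1) by (simp add: mono_Max_commute strict_mono_mono)
  then show ?thesis
    unfolding squash_less_def sym using assms(2,3) inj
    by (cases "v = u") (auto simp: inj_image_eq_iff inj_image_mem_iff)
qed

lemma squash_lessI:
  assumes "finite v" "finite u" "N \<in> u" "N \<notin> v" "\<And>x. x > N \<Longrightarrow> x \<in> v \<longleftrightarrow> x \<in> u"
  shows "squash_less v u"
proof -
  let ?D = "(v - u) \<union> (u - v)"
  have "Max ?D = N"
    using assms by (intro Max_eqI) (auto intro: leI)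
  then show ?thesis unfolding squash_less_def using assms by auto
qed

lemma squash_less_iff:
  assumes "finite v" "finite u"
  shows "squash_less v u \<longleftrightarrow> (\<exists>N. N \<in> u \<and> N \<notin> v \<and> (\<forall>x>N. x \<in> v \<longleftrightarrow> x \<in> u))"
proof
  assume less: "squash_less v u"
  let ?D = "(v - u) \<union> (u - v)"
  have ne: "?D \<noteq> {}" and fin: "finite ?D" using less assms unfolding squash_less_def by auto
  define N where "N = Max ?D"
  have "N \<in> ?D" unfolding N_def using Max_in[OF fin ne] .
  moreover have "N \<in> u" using less unfolding squash_less_def N_def by simp
  moreover have "x \<in> v \<longleftrightarrow> x \<in> u" if "x > N" for x
  proof -
    have "x \<notin> ?D" using Max_ge[OF fin, of x] that unfolding N_def by linarith
    then show ?thesis by blast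
  qed
  ultimately show "\<exists>N. N \<in> u \<and> N \<notin> v \<and> (\<forall>x>N. x \<in> v \<longleftrightarrow> x \<in> u)" by blast
next
  assume "\<exists>N. N \<in> u \<and> N \<notin> v \<and> (\<forall>x>N. x \<in> v \<longleftrightarrow> x \<in> u)"
  then show "squash_less v u" using squash_lessI[OF assms] by blast
qed

lemma mem_unshift_from_image_iff:
  assumes "s \<notin> v" shows "x \<in> unshift_from s ` v \<longleftrightarrow> shift_from s x \<in> v"
  using inj_image_mem_iff[OF inj_shift_from, of s x "unshift_from s ` v"]
    shift_from_image_unshift_from_image[OF assms] by simp

lemma squash_less_unshift_from_below:
  assumes "finite u" "finite v" "y < M" "y \<notin> v" "M \<notin> v" "M - 1 \<in> u"
    and above: "\<And>x. x \<ge> M \<Longrightarrow> Suc x \<in> v \<longleftrightarrow> x \<in> u"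
  shows "squash_less (unshift_from y ` v) u"
proof (rule squash_lessI[OF _ assms(1,6)])
  show "finite (unshift_from y ` v)" using assms(2) by simp
  have "shift_from y (M - 1) = M" using assms(3) unfolding shift_from_def by simp
  then show "M - 1 \<notin> unshift_from y ` v"
    using mem_unshift_from_image_iff[OF assms(4)] assms(5) by simp
  fix x assume "x > M - 1"
  then have "x \<ge> M" "shift_from y x = Suc x" using assms(3) unfolding shift_from_def by auto
  then show "x \<in> unshift_from y ` v \<longleftrightarrow> x \<in> u"
    using mem_unshift_from_image_iff[OF assms(4)] above by simp
qed

lemma unshift_from_image_eq_if_no_gap_below:
  assumes "u \<in> Nsubsets d" "v \<in> Nsubsets d" "M \<ge> 1" "M \<notin> v" "{1..<M} \<subseteq> v"
    and above: "\<And>x. x \<ge> M \<Longrightarrow> x \<in> u \<Longrightarrow> Suc x \<in> v"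
  shows "unshift_from M ` v = u"
proof -
  have "x \<in> unshift_from M ` v" if "x \<in> u" for x
  proof (cases "x < M")
    case True
    moreover have "x \<ge> 1" using that assms(1) unfolding Nsubsets_def by (cases x) auto
    ultimately show ?thesis
      using mem_unshift_from_image_iff[OF assms(4)] assms(5) unfolding shift_from_def by auto
  next
    case False
    then show ?thesis
      using mem_unshift_from_image_iff[OF assms(4)] above that unfolding shift_from_def by simp
  qed
  moreover have "finite (unshift_from M ` v)" "card (unshift_from M ` v) = card u"
    using unshift_from_image_Nsubsets[OF assms(2,3,4)] assms(1) unfolding Nsubsets_def by simp_all
  ultimately show ?thesis by (metis card_subset_eq subsetI)
qed

text \<open>Compare \<open>v\<close> with \<open>w = shift_from s ` u\<close> at the top element \<open>M\<close> of their symmetric difference.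
  If \<open>M < s\<close>, the gap \<open>s\<close> of \<open>w\<close> is also a gap of \<open>v\<close> and both sets come from the same shift.
  Otherwise \<open>M - 1 \<in> u\<close>; closing any gap of \<open>v\<close> below \<open>M\<close> moves \<open>M\<close> down to the missing \<open>M - 1\<close>,
  and if there is no such gap, closing the gap \<open>M\<close> itself gives back \<open>u\<close>.\<close>
lemma squash_less_shift_from_lift:
  assumes u: "u \<in> Nsubsets d" and v: "v \<in> Nsubsets d" and "s \<ge> 1"
    and less: "squash_less v (shift_from s ` u)"
  shows "\<exists>s'\<ge>1. s' \<notin> v \<and> (squash_less (unshift_from s' ` v) u \<or> unshift_from s' ` v = u)"
proof -
  let ?w = "shift_from s ` u"
  have fin: "finite u" "finite v" "finite ?w" using u v unfolding Nsubsets_def by auto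
  obtain M where M: "M \<in> ?w" "M \<notin> v" and agree: "\<And>x. x > M \<Longrightarrow> x \<in> v \<longleftrightarrow> x \<in> ?w"
    using less squash_less_iff[OF fin(2,3)] by blast
  have mem_u: "x \<in> u \<longleftrightarrow> shift_from s x \<in> ?w" for x
    using inj_image_mem_iff[OF inj_shift_from] by simp
  have "s \<notin> ?w" unfolding shift_from_def by auto
  then have "M \<noteq> s" using M(1) by blast
  then consider "M < s" | "s < M" by linarith
  then show ?thesis
  proof cases
    case 1
    then have "s \<notin> v" using agree \<open>s \<notin> ?w\<close> by blast
    then have "squash_less (shift_from s ` unshift_from s ` v) ?w"
      using less shift_from_image_unshift_from_image by simp
    then have "squash_less (unshift_from s ` v) u"
      using squash_less_image_strict_mono[OF strict_mono_shift_from] fin by blast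
    with \<open>s \<notin> v\<close> \<open>s \<ge> 1\<close> show ?thesis by blast
  next
    case 2
    then have "shift_from s (M - 1) = M" unfolding shift_from_def by simp
    then have "M - 1 \<in> u" using mem_u[of "M - 1"] M(1) by simp
    have above: "Suc x \<in> v \<longleftrightarrow> x \<in> u" if "x \<ge> M" for x
    proof -
      have "shift_from s x = Suc x" using that 2 unfolding shift_from_def by simp
      then show ?thesis using agree[of "Suc x"] mem_u[of x] that by simp
    qed
    show ?thesis
    proof (cases "{1..<M} \<subseteq> v")
      case True
      then have "unshift_from M ` v = u"
        using unshift_from_image_eq_if_no_gap_below[OF u v _ M(2)] above 2 by simp
      with M(2) 2 show ?thesis by (intro exI[of _ M]) auto
    next
      case False
      then obtain y where "1 \<le> y" "y < M" "y \<notin> v" by (meson atLeastLessThan_iff subsetI)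
      then show ?thesis
        using squash_less_unshift_from_below[OF fin(1,2) _ _ M(2) \<open>M - 1 \<in> u\<close> above] by blast
    qed
  qed
qed

lemma sorted_list_of_set_image_strict_mono:
  assumes "finite A" "strict_mono_on A f"
  shows "sorted_list_of_set (f ` A) = map f (sorted_list_of_set A)"
proof -
  let ?xs = "sorted_list_of_set A"
  have "sorted_wrt (<) (map f ?xs)"
    unfolding sorted_wrt_map
  proof (rule sorted_wrt_mono_rel[of _ "(<)"])
    fix x y assume "x \<in> set ?xs" "y \<in> set ?xs" "x < y"
    then show "f x < f y" using assms strict_mono_onD[of A f x y] by simp
  qed simp
  moreover have "set (map f ?xs) = f ` A" using assms(1) by simp
  ultimately show ?thesis
    using strict_sorted_equal[of "map f ?xs" "sorted_list_of_set (f ` A)"] assms(1) by simp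
qed

lemma exists_first_index_not:
  fixes n :: nat
  assumes "\<not> (\<forall>i<n. P i)"
  shows "\<exists>i0<n. \<not> P i0 \<and> (\<forall>i<i0. P i)"
proof -
  have "\<exists>i. i < n \<and> \<not> P i" using assms by blast
  from exists_least_iff[of "\<lambda>i. i < n \<and> \<not> P i", THEN iffD1, OF this] show ?thesis
    by force
qed

text \<open>At the first index \<open>i0\<close> where \<open>vs\<close> overtakes \<open>us\<close>, the value \<open>vs ! i0 - 1\<close> is a gap of
  \<open>vs\<close>; closing it lowers exactly the entries from \<open>i0\<close> on, and these were at most one above
  \<open>us\<close> because \<open>us ! i0\<close> already lies beyond the gap \<open>s\<close>.\<close>
lemma nth_le_after_unshift_from:
  fixes us vs :: "nat list"
  assumes sorted: "sorted_wrt (<) us" "sorted_wrt (<) vs" and len: "length vs = length us"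
    and "s \<ge> 1" and le: "\<And>i. i < length us \<Longrightarrow> vs ! i \<le> shift_from s (us ! i)"
    and i0: "i0 < length us" "us ! i0 < vs ! i0" and first: "\<And>i. i < i0 \<Longrightarrow> vs ! i \<le> us ! i"
  shows "\<exists>s'\<ge>1. s' \<notin> set vs \<and> (\<forall>i<length us. unshift_from s' (vs ! i) \<le> us ! i)"
proof -
  have "us ! i0 \<ge> s"
  proof (rule ccontr)
    assume "\<not> us ! i0 \<ge> s"
    then have "shift_from s (us ! i0) = us ! i0" unfolding shift_from_def by simp
    with le[OF i0(1)] i0(2) show False by simp
  qed
  define s' where "s' = vs ! i0 - 1"
  have "s' \<ge> 1" using i0(2) \<open>us ! i0 \<ge> s\<close> \<open>s \<ge> 1\<close> unfolding s'_def by simp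
  have before: "vs ! i < s'" if "i < i0" for i
  proof -
    have "us ! i < us ! i0" using sorted_wrt_nth_less[OF sorted(1) that i0(1)] .
    then show ?thesis using first[OF that] i0(2) unfolding s'_def by linarith
  qed
  have after: "s' < vs ! i" if "i0 \<le> i" "i < length us" for i
  proof (cases "i = i0")
    case True
    then show ?thesis using i0(2) unfolding s'_def by simp
  next
    case False
    then have "vs ! i0 < vs ! i"
      using sorted_wrt_nth_less[OF sorted(2), of i0 i] that len by simp
    then show ?thesis unfolding s'_def by simp
  qed
  have "s' \<notin> set vs"
  proof
    assume "s' \<in> set vs"
    then obtain i where "i < length us" "vs ! i = s'" using len in_set_conv_nth[of s' vs] by auto
    then show False using before[of i] after[of i] by (cases "i < i0") auto
  qed
  moreover have "unshift_from s' (vs ! i) \<le> us ! i" if "i < length us" for i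
  proof (cases "i < i0")
    case True
    then have "unshift_from s' (vs ! i) = vs ! i"
      using before[OF True] unfolding unshift_from_def by simp
    then show ?thesis using first[OF True] by simp
  next
    case False
    then have "i0 \<le> i" by simp
    then have "us ! i0 \<le> us ! i"
      using sorted_wrt_nth_less[OF sorted(1), of i0 i] that by (cases "i = i0") auto
    then have "shift_from s (us ! i) = Suc (us ! i)"
      using \<open>us ! i0 \<ge> s\<close> unfolding shift_from_def by simp
    moreover have "unshift_from s' (vs ! i) = vs ! i - 1"
      using after[OF \<open>i0 \<le> i\<close> that] unfolding unshift_from_def by simp
    ultimately show ?thesis using le[OF that] by simp
  qed
  ultimately show ?thesis using \<open>s' \<ge> 1\<close> by blast
qed

lemma borel_le_shift_from_lift:
  assumes "finite u" "finite v" "s \<ge> 1" and le: "borel_le v (shift_from s ` u)"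
  shows "\<exists>s'\<ge>1. s' \<notin> v \<and> borel_le (unshift_from s' ` v) u"
proof -
  define us where "us = sorted_list_of_set u"
  define vs where "vs = sorted_list_of_set v"
  have len: "length us = card u" "length vs = card u"
    using le card_shift_from_image[of s u] unfolding us_def vs_def borel_le_def by simp_all
  have le_shift: "vs ! i \<le> shift_from s (us ! i)" if "i < length us" for i
    using le that len sorted_list_of_set_image_strict_mono[OF assms(1), of "shift_from s"]
      strict_mono_shift_from card_shift_from_image[of s u]
    unfolding borel_le_def us_def vs_def by (simp add: strict_mono_on_def strict_mono_def)
  have borel_le_unshift: "borel_le (unshift_from s' ` v) u \<longleftrightarrow>
      (\<forall>i<length us. unshift_from s' (vs ! i) \<le> us ! i)" if "s' \<notin> v" for s'
  proof -
    have "sorted_list_of_set (unshift_from s' ` v) = map (unshift_from s') vs"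
      unfolding vs_def using sorted_list_of_set_image_strict_mono[OF assms(2)]
        strict_mono_on_unshift_from[OF that] by blast
    moreover have "card (unshift_from s' ` v) = card u"
      using calculation len assms(2) by (metis finite_imageI length_map length_sorted_list_of_set vs_def)
    ultimately show ?thesis using len unfolding borel_le_def us_def vs_def by simp
  qed
  show ?thesis
  proof (cases "\<forall>i<length us. vs ! i \<le> us ! i")
    case True
    define s' where "s' = Suc (Max (insert 0 v))"
    have "\<forall>x\<in>v. x < s'" using assms(2) unfolding s'_def by (simp add: le_imp_less_Suc)
    then have "s' \<notin> v" "unshift_from s' ` v = v" using unshift_from_image_id by auto
    moreover have "borel_le v u"
      using True len unfolding borel_le_def us_def vs_def by simp
    ultimately show ?thesis unfolding s'_def by auto
  next
    case False
    then obtain i0 where i0: "i0 < length us" "us ! i0 < vs ! i0" "\<And>i. i < i0 \<Longrightarrow> vs ! i \<le> us ! i"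
      using exists_first_index_not[of "length us" "\<lambda>i. vs ! i \<le> us ! i"] by auto
    have "sorted_wrt (<) us" "sorted_wrt (<) vs" "length vs = length us"
      using len unfolding us_def vs_def by simp_all
    then obtain s' where "s' \<ge> 1" "s' \<notin> set vs"
      and "\<forall>i<length us. unshift_from s' (vs ! i) \<le> us ! i"
      using nth_le_after_unshift_from[OF _ _ _ \<open>s \<ge> 1\<close> le_shift i0] by blast
    then show ?thesis
      using borel_le_unshift set_sorted_list_of_set[OF assms(2)] unfolding vs_def by auto
  qed
qed

lemma shifted_family_shift_images:
  assumes "\<F> \<subseteq> Nsubsets d" "shifted_family d \<F>"
  shows "shifted_family d (shift_images \<F>)"
proof -
  have "\<exists>s'\<ge>1. s' \<notin> v \<and> (borel_le (unshift_from s' ` v) u \<or> unshift_from s' ` v = u)"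
    if "u \<in> Nsubsets d" "v \<in> Nsubsets d" "s \<ge> 1" "borel_le v (shift_from s ` u)" for u v s
    using borel_le_shift_from_lift[of u v s] that unfolding Nsubsets_def by blast
  then show ?thesis
    using shift_images_down_closed[OF assms(1), of borel_le] assms(2)
    unfolding shifted_family_def by blast
qed

lemma compressed_family_shift_images:
  assumes "\<F> \<subseteq> Nsubsets d" "compressed_family d \<F>"
  shows "compressed_family d (shift_images \<F>)"
proof -
  have "finite (shift_images \<F>)"
    using assms finite_shift_images unfolding compressed_family_def Nsubsets_def by blast
  then show ?thesis
    using shift_images_down_closed[OF assms(1), of squash_less] squash_less_shift_from_lift assms(2)
    unfolding compressed_family_def by blast
qed

theorem corollary4p1:
  fixes m :: nat and \<Delta> :: "nat set set"
  assumes "simplicial_complex m \<Delta>"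
  shows "(shifted_complex \<Delta> \<longrightarrow> shifted_complex (IncComplex \<Delta>)) \<and>
         (compressed_complex \<Delta> \<longrightarrow> compressed_complex (IncComplex \<Delta>))"
  using shifted_family_shift_images compressed_family_shift_images
    faces_IncComplex[OF assms] simplicial_complex_faces_Nsubsets[OF assms]
  unfolding shifted_complex_def compressed_complex_def by simp

end
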